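(* If $\beta_\varphi>0$ and the limit $\zeta_\varphi=\lim_{r\to\infty}\frac{\log\varphi(r)}{\log\varphi(r^2)}$ exists, then $\alpha_{\varphi,s}=1$.
   Context: Let $R_0>0$. $\varphi:(R_0,\infty)\to(0,\infty)$ is a non-decreasing unbounded function with $\log r\le\varphi(r)\le r$ for $r\ge R_0$; $s:(R_0,\infty)\to(0,\infty)$ is non-decreasing with $r<s(r)\le r^2$ for $r\ge R_0$ and $\liminf_{r\to\infty}s(r)/r>1$. $\alpha_{\varphi,s}=\liminf_{r\to\infty}\frac{\log\varphi(r)}{\log\varphi(s(r))}$, $\beta_\varphi=\limsup_{r\to\infty}\frac{\log\log r}{\log\varphi(r)}$. *)

theory Defs
  imports "HOL-Analysis.Analysis"
begin

definition admissible_pair :: "real \<Rightarrow> (real \<Rightarrow> real) \<Rightarrow> (real \<Rightarrow> real) \<Rightarrow> bool" where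
  "admissible_pair R0 \<phi> s \<longleftrightarrow>
     R0 > 0 \<and>
     (\<forall>r>R0. \<phi> r > 0) \<and> mono_on {R0<..} \<phi> \<and> (\<forall>M. \<exists>r>R0. \<phi> r > M) \<and>
     (\<forall>r>R0. ln r \<le> \<phi> r \<and> \<phi> r \<le> r) \<and>
     (\<forall>r>R0. s r > 0) \<and> mono_on {R0<..} s \<and>
     (\<forall>r>R0. r < s r \<and> s r \<le> r\<^sup>2) \<and>
     Liminf at_top (\<lambda>r. ereal (s r / r)) > 1"

definition alpha_phi_s :: "(real \<Rightarrow> real) \<Rightarrow> (real \<Rightarrow> real) \<Rightarrow> ereal" where
  "alpha_phi_s \<phi> s = Liminf at_top (\<lambda>r. ereal (ln (\<phi> r) / ln (\<phi> (s r))))"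

definition beta_phi :: "(real \<Rightarrow> real) \<Rightarrow> ereal" where
  "beta_phi \<phi> = Limsup at_top (\<lambda>r. ereal (ln (ln r) / ln (\<phi> r)))"

end

theory Submission
  imports Defs "HOL-Real_Asymp.Real_Asymp"
begin

text \<open>
  Write \<open>L = ln \<circ> \<phi>\<close>, which is eventually positive and non-decreasing. If the limit
  \<open>\<zeta>\<close> of \<open>L r / L (r\<^sup>2)\<close> were below 1, then \<open>L (r\<^sup>2) \<ge> b L r\<close> for some \<open>b > 1\<close>, i.e.
  \<open>u \<mapsto> L (exp (exp u))\<close> grows geometrically in steps of \<open>ln 2\<close>; hence it outgrows \<open>u\<close>,
  so \<open>ln (ln r) / L r \<longrightarrow> 0\<close> and \<open>\<beta>\<^sub>\<phi> = 0\<close>. Thus \<open>\<zeta> = 1\<close>, and since \<open>r < s r \<le> r\<^sup>2\<close>, the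
  ratio \<open>L r / L (s r)\<close> is squeezed between \<open>L r / L (r\<^sup>2)\<close> and 1.
\<close>

lemma geometric_growth_lower_bound:
  fixes g :: "real \<Rightarrow> real"
  assumes "h > 0" "b > 0" "g u0 > 0"
    and mono: "\<And>x y. u0 \<le> x \<Longrightarrow> x \<le> y \<Longrightarrow> g x \<le> g y"
    and step: "\<And>u. u0 \<le> u \<Longrightarrow> b * g u \<le> g (u + h)"
    and "0 \<le> t"
  shows "g u0 * b ^ n \<le> g (u0 + real n * h + t)"
proof (induction n)
  case 0
  then show ?case using mono[of u0 "u0 + t"] \<open>0 \<le> t\<close> by simp
next
  case (Suc n)
  have "g u0 * b ^ Suc n \<le> b * g (u0 + real n * h + t)"
    using Suc \<open>b > 0\<close> by (simp add: mult.left_commute)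
  also have "\<dots> \<le> g (u0 + real n * h + t + h)"
    using \<open>h > 0\<close> \<open>0 \<le> t\<close> by (intro step) (simp add: zero_le_mult_iff)
  finally show ?case by (simp add: algebra_simps)
qed

lemma tendsto_id_over_geometric_growth:
  fixes g :: "real \<Rightarrow> real"
  assumes "h > 0" "b > 1" "g u0 > 0"
    and mono: "\<And>x y. u0 \<le> x \<Longrightarrow> x \<le> y \<Longrightarrow> g x \<le> g y"
    and step: "\<And>u. u0 \<le> u \<Longrightarrow> b * g u \<le> g (u + h)"
  shows "((\<lambda>u. u / g u) \<longlongrightarrow> 0) at_top"
proof -
  define G where "G u = g u0 * b powr ((u - u0) / h - 1)" for u
  have G_le: "G u \<le> g u" if "u0 \<le> u" for u
  proof -
    define n where "n = nat \<lfloor>(u - u0) / h\<rfloor>"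
    have "real n = of_int \<lfloor>(u - u0) / h\<rfloor>"
      using that \<open>h > 0\<close> unfolding n_def by simp
    hence n: "real n \<le> (u - u0) / h" "(u - u0) / h - 1 < real n"
      by linarith+
    have "G u \<le> g u0 * b powr real n"
      unfolding G_def using n(2) \<open>b > 1\<close> \<open>g u0 > 0\<close> by (intro mult_left_mono powr_mono) auto
    also have "\<dots> = g u0 * b ^ n"
      using \<open>b > 1\<close> by (simp add: powr_realpow)
    also have "\<dots> \<le> g (u0 + real n * h + (u - u0 - real n * h))"
      using n(1) \<open>h > 0\<close> \<open>b > 1\<close> \<open>g u0 > 0\<close>
      by (intro geometric_growth_lower_bound[where g = g, OF \<open>h > 0\<close> _ _ mono step])
         (auto simp: field_simps)
    finally show ?thesis by simp
  qed
  have G_pos: "G u > 0" for u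
    unfolding G_def using \<open>b > 1\<close> \<open>g u0 > 0\<close> by simp
  have "((\<lambda>u. u / G u) \<longlongrightarrow> 0) at_top"
    unfolding G_def using \<open>h > 0\<close> \<open>b > 1\<close> \<open>g u0 > 0\<close> by real_asymp
  moreover have "\<forall>\<^sub>F u in at_top. 0 \<le> u / g u \<and> u / g u \<le> u / G u"
    using eventually_ge_at_top[of "max u0 0"]
  proof eventually_elim
    case (elim u)
    then have "0 < G u" "G u \<le> g u" using G_le G_pos by auto
    then show ?case using elim by (simp add: frac_le)
  qed
  ultimately show ?thesis
    by (auto intro: tendsto_sandwich[OF _ _ tendsto_const] elim: eventually_mono)
qed

lemma ln_ln_over_tendsto_0_if_square_growth:
  fixes L :: "real \<Rightarrow> real"
  assumes pos_mono: "\<And>x y. r1 \<le> x \<Longrightarrow> x \<le> y \<Longrightarrow> 0 < L x \<and> L x \<le> L y"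
    and "b > 1" and growth: "\<forall>\<^sub>F r in at_top. b * L r \<le> L (r\<^sup>2)"
  shows "((\<lambda>r. ln (ln r) / L r) \<longlongrightarrow> 0) at_top"
proof -
  obtain r2 where r2: "\<And>r. r2 \<le> r \<Longrightarrow> b * L r \<le> L (r\<^sup>2)"
    using growth by (auto simp: eventually_at_top_linorder)
  define r3 where "r3 = max (max r1 r2) 2"
  define u0 where "u0 = ln (ln r3)"
  define g where "g u = L (exp (exp u))" for u
  have "ln r3 > 0"
    unfolding r3_def by simp
  have r3_le: "r3 \<le> exp (exp u)" if "u0 \<le> u" for u
  proof -
    have "ln r3 = exp u0"
      unfolding u0_def using \<open>ln r3 > 0\<close> by simp
    also have "\<dots> \<le> exp u"
      using that by simp
    finally have "exp (ln r3) \<le> exp (exp u)"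
      by simp
    then show ?thesis
      by (simp add: r3_def)
  qed
  have g_mono: "g x \<le> g y" if "u0 \<le> x" "x \<le> y" for x y
    unfolding g_def using pos_mono r3_le[of x] that by (simp add: r3_def)
  have g_step: "b * g u \<le> g (u + ln 2)" if "u0 \<le> u" for u
  proof -
    have "exp (exp (u + ln 2)) = (exp (exp u))\<^sup>2"
      by (simp add: exp_add power2_eq_square exp_add[symmetric])
    then show ?thesis
      unfolding g_def using r2 r3_le[OF that] by (simp add: r3_def)
  qed
  have "g u0 > 0"
    unfolding g_def u0_def using pos_mono[of r3 r3] \<open>ln r3 > 0\<close> by (simp add: r3_def)
  then have "((\<lambda>u. u / g u) \<longlongrightarrow> 0) at_top"
    by (intro tendsto_id_over_geometric_growth[where g = g, OF _ \<open>b > 1\<close> _ g_mono g_step]) auto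
  moreover have "filterlim (\<lambda>r::real. ln (ln r)) at_top at_top"
    by real_asymp
  ultimately have "((\<lambda>r. ln (ln r) / g (ln (ln r))) \<longlongrightarrow> 0) at_top"
    by (rule filterlim_compose)
  moreover have "\<forall>\<^sub>F r in at_top. ln (ln r) / g (ln (ln r)) = ln (ln r) / L r"
    using eventually_gt_at_top[of "exp 1"]
  proof eventually_elim
    case (elim r)
    then have "r > 1"
      using one_less_exp_iff[of 1] by linarith
    then show ?case
      unfolding g_def by simp
  qed
  ultimately show ?thesis
    by (rule Lim_transform_eventually)
qed

lemma ratio_le_1_if_pos_mono:
  fixes L :: "real \<Rightarrow> real"
  assumes pos_mono: "\<And>x y. r1 \<le> x \<Longrightarrow> x \<le> y \<Longrightarrow> 0 < L x \<and> L x \<le> L y"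
    and "r1 \<le> x" "x \<le> y"
  shows "L x / L y \<le> 1"
  using pos_mono[OF assms(2,3)] pos_mono[of y y] assms(2,3) by simp

lemma square_ratio_limit_eq_1:
  fixes L :: "real \<Rightarrow> real"
  assumes pos_mono: "\<And>x y. r1 \<le> x \<Longrightarrow> x \<le> y \<Longrightarrow> 0 < L x \<and> L x \<le> L y"
    and lim: "((\<lambda>r. L r / L (r\<^sup>2)) \<longlongrightarrow> \<zeta>) at_top"
    and not_lim: "\<not> ((\<lambda>r. ln (ln r) / L r) \<longlongrightarrow> 0) at_top"
  shows "\<zeta> = 1"
proof -
  have le_square: "r \<le> r\<^sup>2" if "1 \<le> r" for r :: real
    using that by (simp add: power2_eq_square)
  have "\<forall>\<^sub>F r in at_top. L r / L (r\<^sup>2) \<le> 1"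
    using eventually_ge_at_top[of "max r1 1"]
    by eventually_elim (auto intro: ratio_le_1_if_pos_mono[OF pos_mono] le_square)
  then have "\<zeta> \<le> 1"
    using tendsto_upperbound[OF lim] by simp
  moreover have "\<not> \<zeta> < 1"
  proof
    assume "\<zeta> < 1"
    define c where "c = (1 + max \<zeta> 0) / 2"
    have c: "0 < c" "c < 1" "\<zeta> < c"
      using \<open>\<zeta> < 1\<close> unfolding c_def by auto
    have growth: "\<forall>\<^sub>F r in at_top. (1 / c) * L r \<le> L (r\<^sup>2)"
      using order_tendstoD(2)[OF lim c(3)] eventually_ge_at_top[of "max r1 1"]
    proof eventually_elim
      case (elim r)
      then have "0 < L (r\<^sup>2)"
        using pos_mono[of "r\<^sup>2" "r\<^sup>2"] le_square[of r] by auto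
      then show ?case
        using elim(1) c(1) by (simp add: field_simps)
    qed
    then show False
      using ln_ln_over_tendsto_0_if_square_growth[OF pos_mono _ growth] c not_lim by simp
  qed
  ultimately show ?thesis
    by simp
qed

lemma tendsto_ratio_1_if_between_square:
  fixes L s :: "real \<Rightarrow> real"
  assumes pos_mono: "\<And>x y. r1 \<le> x \<Longrightarrow> x \<le> y \<Longrightarrow> 0 < L x \<and> L x \<le> L y"
    and between: "\<forall>\<^sub>F r in at_top. r \<le> s r \<and> s r \<le> r\<^sup>2"
    and lim: "((\<lambda>r. L r / L (r\<^sup>2)) \<longlongrightarrow> 1) at_top"
  shows "((\<lambda>r. L r / L (s r)) \<longlongrightarrow> 1) at_top"
proof (rule tendsto_sandwich[OF _ _ lim tendsto_const])
  show "\<forall>\<^sub>F r in at_top. L r / L (r\<^sup>2) \<le> L r / L (s r)"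
    using between eventually_ge_at_top[of r1]
  proof eventually_elim
    case (elim r)
    then show ?case
      using pos_mono[of r r] pos_mono[of "s r" "r\<^sup>2"] by (intro divide_left_mono) auto
  qed
  show "\<forall>\<^sub>F r in at_top. L r / L (s r) \<le> 1"
    using between eventually_ge_at_top[of r1]
    by eventually_elim (auto intro: ratio_le_1_if_pos_mono[OF pos_mono])
qed

lemma admissible_pair_ln_phi_pos_mono:
  assumes "admissible_pair R0 \<phi> s"
  obtains r1 where "\<And>x y. r1 \<le> x \<Longrightarrow> x \<le> y \<Longrightarrow> 0 < ln (\<phi> x) \<and> ln (\<phi> x) \<le> ln (\<phi> y)"
proof
  have ln_le_phi: "\<And>r. R0 < r \<Longrightarrow> ln r \<le> \<phi> r" and "mono_on {R0<..} \<phi>"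
    using assms unfolding admissible_pair_def by auto
  define r1 where "r1 = max R0 (exp 1) + 1"
  have "1 < \<phi> x" if "r1 \<le> x" for x
  proof -
    have "exp 1 < x" "R0 < x"
      using that unfolding r1_def by auto
    then have "1 < ln x"
      by (metis exp_gt_zero less_trans ln_exp ln_less_cancel_iff)
    then show ?thesis
      using ln_le_phi[OF \<open>R0 < x\<close>] by linarith
  qed
  moreover have "\<phi> x \<le> \<phi> y" if "r1 \<le> x" "x \<le> y" for x y
    using that \<open>mono_on {R0<..} \<phi>\<close> unfolding r1_def by (auto intro: mono_onD)
  ultimately show "0 < ln (\<phi> x) \<and> ln (\<phi> x) \<le> ln (\<phi> y)" if "r1 \<le> x" "x \<le> y" for x y
    using that by (smt (verit) ln_gt_zero ln_le_cancel_iff)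
qed

lemma admissible_pair_between_square:
  assumes "admissible_pair R0 \<phi> s"
  shows "\<forall>\<^sub>F r in at_top. r \<le> s r \<and> s r \<le> r\<^sup>2"
  using eventually_gt_at_top[of R0] by eventually_elim (use assms in \<open>auto simp: admissible_pair_def\<close>)

theorem lemma3p4:
  fixes R0 :: real and \<phi> s :: "real \<Rightarrow> real"
  assumes "admissible_pair R0 \<phi> s"
    and "beta_phi \<phi> > 0"
    and "\<exists>\<zeta>::real. ((\<lambda>r. ln (\<phi> r) / ln (\<phi> (r\<^sup>2))) \<longlongrightarrow> \<zeta>) at_top"
  shows "alpha_phi_s \<phi> s = 1"
proof -
  obtain r1 where pos_mono:
    "\<And>x y. r1 \<le> x \<Longrightarrow> x \<le> y \<Longrightarrow> 0 < ln (\<phi> x) \<and> ln (\<phi> x) \<le> ln (\<phi> y)"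
    using admissible_pair_ln_phi_pos_mono[OF assms(1)] by blast
  obtain \<zeta> where lim: "((\<lambda>r. ln (\<phi> r) / ln (\<phi> (r\<^sup>2))) \<longlongrightarrow> \<zeta>) at_top"
    using assms(3) by blast
  have "\<not> ((\<lambda>r. ln (ln r) / ln (\<phi> r)) \<longlongrightarrow> 0) at_top"
  proof
    assume "((\<lambda>r. ln (ln r) / ln (\<phi> r)) \<longlongrightarrow> 0) at_top"
    then have "beta_phi \<phi> = 0"
      unfolding beta_phi_def zero_ereal_def by (intro lim_imp_Limsup) (simp_all add: tendsto_ereal)
    with assms(2) show False
      by simp
  qed
  then have "\<zeta> = 1"
    using square_ratio_limit_eq_1[where L = "\<lambda>r. ln (\<phi> r)", OF pos_mono] lim
    by blast
  then have "((\<lambda>r. ln (\<phi> r) / ln (\<phi> (s r))) \<longlongrightarrow> 1) at_top"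
    using tendsto_ratio_1_if_between_square[where L = "\<lambda>r. ln (\<phi> r)", OF pos_mono admissible_pair_between_square[OF assms(1)]]
      lim by simp
  then show ?thesis
    unfolding alpha_phi_s_def one_ereal_def by (intro lim_imp_Liminf) (simp_all add: tendsto_ereal)
qed

end
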